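(* For every $n\geq1$, $$\sum_{\sigma\in\mathfrak S_{n}}u^{{\rm L}(\sigma)}(-1)^{{\rm RLmin}(\sigma)}=\begin{cases}(1-u)^{\lfloor n/2\rfloor},& n\text{ even},\\ -(1-u)^{\lfloor n/2\rfloor},& n\text{ odd}.\end{cases}$$
   Context: For $\sigma=\sigma_1\cdots\sigma_n\in\mathfrak S_n$: ${\rm L}(\sigma)$ (left peaks) is the number of $i$ with $1\le i<n$ and $\sigma_{i-1}<\sigma_i>\sigma_{i+1}$, with the convention $\sigma_0=0$; ${\rm RLmin}(\sigma)$ is the number of $i$ with $\sigma_j>\sigma_i$ for all $j>i$. *)

theory Defs
  imports "HOL-Combinatorics.Permutations"
begin

text \<open>A permutation sigma of S_n is a bijection of {1..n}; its one-line word is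
  sigma 1, ..., sigma n.  We use the convention sigma_0 = 0.\<close>

definition perm_val :: "(nat \<Rightarrow> nat) \<Rightarrow> nat \<Rightarrow> nat" where
  "perm_val \<sigma> i = (if i = 0 then 0 else \<sigma> i)"

definition left_peaks :: "nat \<Rightarrow> (nat \<Rightarrow> nat) \<Rightarrow> nat" where
  "left_peaks n \<sigma> = card {i. 1 \<le> i \<and> i < n \<and>
      perm_val \<sigma> (i - 1) < perm_val \<sigma> i \<and> perm_val \<sigma> i > perm_val \<sigma> (i + 1)}"

definition rl_min :: "nat \<Rightarrow> (nat \<Rightarrow> nat) \<Rightarrow> nat" where
  "rl_min n \<sigma> = card {i. 1 \<le> i \<and> i \<le> n \<and>
      (\<forall>j. i < j \<and> j \<le> n \<longrightarrow> perm_val \<sigma> j > perm_val \<sigma> i)}"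

end

theory Submission
  imports Defs
begin

text \<open>Every word of \<open>S\<^sub>n\<^sub>+\<^sub>1\<close> arises uniquely by inserting the largest letter \<open>n + 1\<close>
  into a word of \<open>S\<^sub>n\<close>. Inserted at the end it adds a right-to-left minimum and keeps the
  left peaks; inserted at any of the other \<open>n\<close> positions it keeps the right-to-left minima,
  becomes a peak itself and destroys the peak next to it, if there is one. Peaks are never
  adjacent, so a word with \<open>p\<close> peaks has exactly \<open>2p\<close> such positions next to a peak. For
  the linear functional \<open>S\<^sub>n(w) = \<Sum>\<^sub>\<sigma> (-1)\<^bsup>RLmin \<sigma>\<^esup> w(L \<sigma>)\<close> this gives
  \<open>S\<^sub>n\<^sub>+\<^sub>1(w) = S\<^sub>n(k \<mapsto> (2k - 1) w(k) + (n - 2k) w(k + 1))\<close>, and by induction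
  \<open>S\<^sub>n(w) = \<Sum>\<^sub>k (-1)\<^bsup>n+k\<^esup> (\<lfloor>n/2\<rfloor> choose k) w(k)\<close>. Taking \<open>w(k) = u\<^sup>k\<close>, the binomial theorem
  gives \<open>(-1)\<^sup>n (1 - u)\<^bsup>\<lfloor>n/2\<rfloor>\<^esup>\<close>.\<close>

text \<open>A word \<open>x\<^sub>1 \<dots> x\<^sub>n\<close> is a list read with 1-based positions; position 0 reads as the
  sentinel 0, matching \<open>perm_val\<close>.\<close>

definition word_at :: "nat list \<Rightarrow> nat \<Rightarrow> nat" where
  "word_at xs i = (if i = 0 then 0 else xs ! (i - 1))"

definition peaks :: "nat list \<Rightarrow> nat set" where
  "peaks xs = {i. 1 \<le> i \<and> i < length xs \<and>
     word_at xs (i - 1) < word_at xs i \<and> word_at xs (i + 1) < word_at xs i}"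

definition rl_minima :: "nat list \<Rightarrow> nat set" where
  "rl_minima xs = {i. 1 \<le> i \<and> i \<le> length xs \<and>
     (\<forall>j. i < j \<and> j \<le> length xs \<longrightarrow> word_at xs i < word_at xs j)}"

definition insert_at :: "nat \<Rightarrow> 'a \<Rightarrow> 'a list \<Rightarrow> 'a list" where
  "insert_at j x ys = take j ys @ x # drop j ys"

definition shift_above :: "nat \<Rightarrow> nat \<Rightarrow> nat" where
  "shift_above j i = (if i \<le> j then i else Suc i)"

lemma inj_shift_above: "inj (shift_above j)"
  by (auto simp: inj_def shift_above_def split: if_splits)

lemma Suc_notin_shift_above_image: "Suc j \<notin> shift_above j ` A"
  by (auto simp: shift_above_def split: if_splits)

lemma length_insert_at [simp]: "j \<le> length ys \<Longrightarrow> length (insert_at j x ys) = Suc (length ys)"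
  by (simp add: insert_at_def)

lemma set_insert_at [simp]: "set (insert_at j x ys) = insert x (set ys)"
  by (metis insert_at_def append_take_drop_id set_append set_simps(2) Un_insert_right)

lemma distinct_insert_at:
  assumes "distinct ys" "x \<notin> set ys"
  shows "distinct (insert_at j x ys)"
  using assms set_take_disj_set_drop_if_distinct[OF assms(1), of j j]
  by (auto simp: insert_at_def dest: in_set_takeD in_set_dropD)

lemma word_at_insert_at:
  assumes "j \<le> length ys" "i \<le> Suc (length ys)"
  shows "word_at (insert_at j x ys) i =
    (if i \<le> j then word_at ys i else if i = Suc j then x else word_at ys (i - 1))"
  using assms
  by (auto simp: word_at_def insert_at_def nth_append min_def nth_Cons' numeral_2_eq_2)

lemma peaks_subset: "peaks ys \<subseteq> {1..<length ys}"
  by (auto simp: peaks_def)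

lemma Suc_notin_peaks: "i \<in> peaks ys \<Longrightarrow> Suc i \<notin> peaks ys"
  by (auto simp: peaks_def)

context
  fixes ys :: "nat list" and M j :: nat
  assumes above: "\<forall>y\<in>set ys. y < M" and M_pos: "0 < M" and j_le: "j \<le> length ys"
begin

private lemmas word_at_ins = word_at_insert_at[OF j_le, of _ M]

private lemma word_at_less_max: "i \<le> length ys \<Longrightarrow> word_at ys i < M"
  using above M_pos by (auto simp: word_at_def)

lemma rl_minima_insert_max_low:
  assumes "i \<le> j"
  shows "i \<in> rl_minima (insert_at j M ys) \<longleftrightarrow> i \<in> rl_minima ys"
proof
  assume "i \<in> rl_minima (insert_at j M ys)"
  then have min: "\<And>l. i < l \<Longrightarrow> l \<le> Suc (length ys) \<Longrightarrow>
      word_at (insert_at j M ys) i < word_at (insert_at j M ys) l" and "1 \<le> i"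
    using j_le by (auto simp: rl_minima_def)
  have "word_at ys i < word_at ys l" if "i < l" "l \<le> length ys" for l
  proof (cases "l \<le> j")
    case True
    then show ?thesis using min[of l] that assms j_le by (simp add: word_at_ins)
  next
    case False
    then show ?thesis using min[of "Suc l"] that assms j_le by (simp add: word_at_ins)
  qed
  then show "i \<in> rl_minima ys" using \<open>1 \<le> i\<close> assms j_le by (auto simp: rl_minima_def)
next
  assume "i \<in> rl_minima ys"
  then have min: "\<And>l. i < l \<Longrightarrow> l \<le> length ys \<Longrightarrow> word_at ys i < word_at ys l"
    and "1 \<le> i" using j_le by (auto simp: rl_minima_def)
  have "word_at (insert_at j M ys) i < word_at (insert_at j M ys) l"
    if "i < l" "l \<le> Suc (length ys)" for l
    using min[of l] min[of "l - 1"] that assms j_le word_at_less_max[of i]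
    by (auto simp: word_at_ins)
  then show "i \<in> rl_minima (insert_at j M ys)"
    using \<open>1 \<le> i\<close> assms j_le by (auto simp: rl_minima_def)
qed

lemma Suc_in_rl_minima_insert_max: "Suc j \<in> rl_minima (insert_at j M ys) \<longleftrightarrow> j = length ys"
proof
  assume "Suc j \<in> rl_minima (insert_at j M ys)"
  then have "\<forall>l. Suc j < l \<and> l \<le> Suc (length ys) \<longrightarrow> M < word_at (insert_at j M ys) l"
    using j_le by (auto simp: rl_minima_def word_at_ins)
  then have "\<not> Suc j < Suc (length ys)"
    using word_at_ins[of "Suc (length ys)"] word_at_less_max[of "length ys"] by auto
  then show "j = length ys" using j_le by simp
qed (use j_le in \<open>auto simp: rl_minima_def\<close>)

lemma rl_minima_insert_max_high:
  assumes "Suc j < i"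
  shows "i \<in> rl_minima (insert_at j M ys) \<longleftrightarrow> i - 1 \<in> rl_minima ys"
proof
  assume "i \<in> rl_minima (insert_at j M ys)"
  then have min: "\<And>l. i < l \<Longrightarrow> l \<le> Suc (length ys) \<Longrightarrow>
      word_at (insert_at j M ys) i < word_at (insert_at j M ys) l"
    and "i \<le> Suc (length ys)" using j_le by (auto simp: rl_minima_def)
  have "word_at ys (i - 1) < word_at ys l" if "i - 1 < l" "l \<le> length ys" for l
    using min[of "Suc l"] that assms \<open>i \<le> Suc (length ys)\<close> by (simp add: word_at_ins)
  then show "i - 1 \<in> rl_minima ys"
    using \<open>i \<le> Suc (length ys)\<close> assms by (auto simp: rl_minima_def)
next
  assume "i - 1 \<in> rl_minima ys"
  then have min: "\<And>l. i - 1 < l \<Longrightarrow> l \<le> length ys \<Longrightarrow> word_at ys (i - 1) < word_at ys l"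
    and "i \<le> Suc (length ys)" using j_le by (auto simp: rl_minima_def)
  have "word_at (insert_at j M ys) i < word_at (insert_at j M ys) l"
    if "i < l" "l \<le> Suc (length ys)" for l
    using min[of "l - 1"] that assms \<open>i \<le> Suc (length ys)\<close> by (auto simp: word_at_ins)
  then show "i \<in> rl_minima (insert_at j M ys)"
    using \<open>i \<le> Suc (length ys)\<close> assms by (auto simp: rl_minima_def)
qed

lemma rl_minima_insert_max:
  "rl_minima (insert_at j M ys) =
     shift_above j ` rl_minima ys \<union> (if j = length ys then {Suc j} else {})"
proof (rule set_eqI)
  fix i
  consider "i \<le> j" | "i = Suc j" | "Suc j < i" by linarith
  then show "i \<in> rl_minima (insert_at j M ys) \<longleftrightarrow>
      i \<in> shift_above j ` rl_minima ys \<union> (if j = length ys then {Suc j} else {})"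
  proof cases
    case 1
    then show ?thesis using rl_minima_insert_max_low[of i]
      by (auto simp: image_iff shift_above_def split: if_splits)
  next
    case 2
    then show ?thesis using Suc_in_rl_minima_insert_max Suc_notin_shift_above_image by auto
  next
    case 3
    then show ?thesis using rl_minima_insert_max_high[of i]
      by (auto simp: image_iff shift_above_def split: if_splits intro: bexI[of _ "i - 1"])
  qed
qed

lemma card_rl_minima_insert_max:
  "card (rl_minima (insert_at j M ys)) = card (rl_minima ys) + (if j = length ys then 1 else 0)"
proof -
  have "finite (rl_minima ys)" by (simp add: rl_minima_def)
  then show ?thesis
    using card_image[OF inj_on_subset[OF inj_shift_above]] Suc_notin_shift_above_image
    by (simp add: rl_minima_insert_max)
qed

lemma peaks_insert_max:
  "peaks (insert_at j M ys) =
     shift_above j ` (peaks ys - {j, Suc j}) \<union> (if j < length ys then {Suc j} else {})"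
proof (rule set_eqI)
  fix i
  have below: "i \<in> peaks (insert_at j M ys) \<longleftrightarrow> i \<in> peaks ys" if "i < j"
    using that j_le by (auto simp: peaks_def word_at_ins)
  have at: "j \<notin> peaks (insert_at j M ys)"
    using j_le word_at_less_max[of j] by (auto simp: peaks_def word_at_ins)
  have new: "Suc j \<in> peaks (insert_at j M ys) \<longleftrightarrow> j < length ys"
    using j_le word_at_less_max[of j] word_at_less_max[of "Suc j"]
    by (auto simp: peaks_def word_at_ins)
  have after: "Suc (Suc j) \<notin> peaks (insert_at j M ys)"
    using j_le word_at_less_max[of "Suc j"] by (auto simp: peaks_def word_at_ins)
  have beyond: "i \<in> peaks (insert_at j M ys) \<longleftrightarrow> i - 1 \<in> peaks ys" if "Suc (Suc j) < i"
    using that j_le by (auto simp: peaks_def word_at_ins split: if_splits)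
  consider "i < j" | "i = j" | "i = Suc j" | "i = Suc (Suc j)" | "Suc (Suc j) < i" by linarith
  then show "i \<in> peaks (insert_at j M ys) \<longleftrightarrow>
      i \<in> shift_above j ` (peaks ys - {j, Suc j}) \<union> (if j < length ys then {Suc j} else {})"
  proof cases
    case 5
    then show ?thesis using beyond
      by (auto simp: image_iff shift_above_def split: if_splits intro: bexI[of _ "i - 1"])
  qed (use below at new after in \<open>auto simp: image_iff shift_above_def split: if_splits\<close>)
qed

lemma card_peaks_insert_max:
  "card (peaks (insert_at j M ys)) =
     (if j < length ys \<and> j \<notin> peaks ys \<and> Suc j \<notin> peaks ys
      then Suc (card (peaks ys)) else card (peaks ys))"
proof -
  let ?P = "peaks ys"
  have fin: "finite ?P" by (simp add: peaks_def)
  have lost: "card (?P \<inter> {j, Suc j}) = (if j \<in> ?P \<or> Suc j \<in> ?P then 1 else 0)"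
    using Suc_notin_peaks[of j ys] by (auto simp: Int_insert_right)
  have kept: "card (shift_above j ` (?P - {j, Suc j})) = card ?P - card (?P \<inter> {j, Suc j})"
    using fin card_image[OF inj_on_subset[OF inj_shift_above]]
    by (simp add: card_Diff_subset_Int)
  have "card ?P \<ge> 1" if "j \<in> ?P \<or> Suc j \<in> ?P"
    using that fin card_0_eq by fastforce
  moreover have "j \<notin> ?P \<and> Suc j \<notin> ?P" if "\<not> j < length ys"
    using that peaks_subset[of ys] by auto
  ultimately show ?thesis
    using fin lost kept Suc_notin_shift_above_image[of j "?P - {j, Suc j}"]
    by (auto simp: peaks_insert_max)
qed

end

lemma card_neighbourhood_non_adjacent:
  assumes sub: "P \<subseteq> {1..<n}" and non_adj: "\<And>i. i \<in> P \<Longrightarrow> Suc i \<notin> P"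
  shows "card {j. j < n \<and> (j \<in> P \<or> Suc j \<in> P)} = 2 * card P"
proof -
  have fin: "finite P" using sub finite_subset by blast
  have "{j. j < n \<and> (j \<in> P \<or> Suc j \<in> P)} = P \<union> (\<lambda>i. i - 1) ` P"
    using sub by (force simp: image_iff)
  moreover have "inj_on (\<lambda>i. i - 1) P"
    using sub by (intro inj_onI) (metis atLeastLessThan_iff diff_Suc_1 not0_implies_Suc
      not_one_le_zero subsetD)
  moreover have "P \<inter> (\<lambda>i. i - 1) ` P = {}"
    using sub non_adj by (force simp: image_iff)
  ultimately show ?thesis
    using fin by (simp add: card_Un_disjoint card_image)
qed

definition perm_words :: "nat \<Rightarrow> nat list set" where
  "perm_words n = {xs. distinct xs \<and> set xs = {1..n}}"

lemma length_perm_words: "xs \<in> perm_words n \<Longrightarrow> length xs = n"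
  by (auto simp: perm_words_def distinct_card[symmetric])

lemma bij_betw_insert_max_perm_words:
  "bij_betw (\<lambda>(ys, j). insert_at j (Suc n) ys) (perm_words n \<times> {..n}) (perm_words (Suc n))"
proof (rule bij_betw_imageI)
  show "inj_on (\<lambda>(ys, j). insert_at j (Suc n) ys) (perm_words n \<times> {..n})"
  proof (rule inj_onI, clarify)
    fix ys j ys' j'
    assume ys: "ys \<in> perm_words n" "j \<le> n" "ys' \<in> perm_words n" "j' \<le> n"
      and eq: "insert_at j (Suc n) ys = insert_at j' (Suc n) ys'"
    have "Suc n \<notin> set (take j ys)" "Suc n \<notin> set (drop j ys)"
      using ys by (auto simp: perm_words_def dest: in_set_takeD in_set_dropD)
    then have parts: "take j ys = take j' ys' \<and> drop j ys = drop j' ys'"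
      using eq by (simp add: insert_at_def append_Cons_eq_iff)
    then have "ys = ys'" by (metis append_take_drop_id)
    moreover have "length ys = n" using ys length_perm_words by auto
    ultimately show "ys = ys' \<and> j = j'"
      using parts ys by (metis length_take min.absorb2)
  qed
next
  show "(\<lambda>(ys, j). insert_at j (Suc n) ys) ` (perm_words n \<times> {..n}) = perm_words (Suc n)"
  proof (rule set_eqI, rule iffI)
    fix xs assume xs: "xs \<in> perm_words (Suc n)"
    then have "Suc n \<in> set xs" by (simp add: perm_words_def)
    then obtain as bs where split: "xs = as @ Suc n # bs" by (meson in_set_conv_decomp)
    have "insert (Suc n) (set (as @ bs)) = {1..Suc n}" "Suc n \<notin> set (as @ bs)"
      "distinct (as @ bs)"
      using xs unfolding split perm_words_def by auto
    moreover have "{1..Suc n} - {Suc n} = {1..n}" by auto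
    ultimately have "as @ bs \<in> perm_words n" unfolding perm_words_def by blast
    moreover have "insert_at (length as) (Suc n) (as @ bs) = xs"
      by (simp add: insert_at_def split)
    moreover have "length as \<le> n" using length_perm_words[OF xs] split by simp
    ultimately show "xs \<in> (\<lambda>(ys, j). insert_at j (Suc n) ys) ` (perm_words n \<times> {..n})"
      by force
  next
    fix xs assume "xs \<in> (\<lambda>(ys, j). insert_at j (Suc n) ys) ` (perm_words n \<times> {..n})"
    then obtain ys j where "ys \<in> perm_words n" "xs = insert_at j (Suc n) ys" by auto
    then show "xs \<in> perm_words (Suc n)"
      by (auto simp: perm_words_def distinct_insert_at)
  qed
qed

definition signed_peak_sum :: "nat \<Rightarrow> (nat \<Rightarrow> 'a::comm_ring_1) \<Rightarrow> 'a" where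
  "signed_peak_sum n w = (\<Sum>xs\<in>perm_words n. (-1) ^ card (rl_minima xs) * w (card (peaks xs)))"

lemma sum_insert_max_positions:
  fixes w :: "nat \<Rightarrow> 'a::comm_ring_1"
  assumes ys: "ys \<in> perm_words n"
  defines "p \<equiv> card (peaks ys)"
  shows "(\<Sum>j\<le>n. (-1) ^ card (rl_minima (insert_at j (Suc n) ys)) *
            w (card (peaks (insert_at j (Suc n) ys))))
    = (-1) ^ card (rl_minima ys) *
        (of_int (2 * int p - 1) * w p + of_int (int n - 2 * int p) * w (Suc p))"
proof -
  let ?P = "peaks ys" and ?r = "card (rl_minima ys)"
  let ?term = "\<lambda>j. (-1) ^ card (rl_minima (insert_at j (Suc n) ys)) *
      w (card (peaks (insert_at j (Suc n) ys)))"
  let ?Q = "\<lambda>j. j \<in> ?P \<or> Suc j \<in> ?P"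
  have len: "length ys = n" using length_perm_words[OF ys] .
  have above: "\<forall>y\<in>set ys. y < Suc n" using ys by (auto simp: perm_words_def)
  have P_sub: "?P \<subseteq> {1..<n}" using peaks_subset[of ys] len by simp
  have inner: "?term j = (-1) ^ ?r * w (if ?Q j then p else Suc p)" if "j < n" for j
    using that len card_rl_minima_insert_max[OF above _, of j]
      card_peaks_insert_max[OF above _, of j]
    by (simp add: p_def)
  have last: "?term n = - ((-1) ^ ?r * w p)"
    using len card_rl_minima_insert_max[OF above _, of n] card_peaks_insert_max[OF above _, of n]
    by (simp add: p_def)
  have "{..<n} \<inter> {j. ?Q j} = {j. j < n \<and> ?Q j}" by auto
  then have near: "card ({..<n} \<inter> {j. ?Q j}) = 2 * p"
    unfolding p_def using card_neighbourhood_non_adjacent[OF P_sub Suc_notin_peaks] by simp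
  have "{..<n} \<inter> - {j. ?Q j} = {..<n} - ({..<n} \<inter> {j. ?Q j})" by auto
  then have far: "card ({..<n} \<inter> - {j. ?Q j}) = n - 2 * p"
    using near by (simp add: card_Diff_subset)
  have le: "2 * p \<le> n"
    using near card_mono[of "{..<n}" "{..<n} \<inter> {j. ?Q j}"] by simp
  have "(\<Sum>j\<le>n. ?term j) = (-1) ^ ?r * (\<Sum>j<n. w (if ?Q j then p else Suc p)) - (-1) ^ ?r * w p"
    by (simp add: lessThan_Suc_atMost[symmetric] inner last sum_distrib_left)
  also have "(\<Sum>j<n. w (if ?Q j then p else Suc p)) =
      of_nat (2 * p) * w p + of_nat (n - 2 * p) * w (Suc p)"
    by (simp add: if_distrib[of w] sum.If_cases near far)
  finally show ?thesis
    using le by (simp add: algebra_simps)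
qed

lemma signed_peak_sum_Suc:
  "signed_peak_sum (Suc n) w =
     signed_peak_sum n (\<lambda>k. of_int (2 * int k - 1) * w k + of_int (int n - 2 * int k) * w (Suc k))"
proof -
  let ?h = "\<lambda>xs. (-1) ^ card (rl_minima xs) * w (card (peaks xs))"
  have "signed_peak_sum (Suc n) w = (\<Sum>(ys, j)\<in>perm_words n \<times> {..n}. ?h (insert_at j (Suc n) ys))"
    unfolding signed_peak_sum_def
    using sum.reindex_bij_betw[OF bij_betw_insert_max_perm_words, of ?h] by (simp add: split_def)
  also have "\<dots> = (\<Sum>ys\<in>perm_words n. \<Sum>j\<le>n. ?h (insert_at j (Suc n) ys))"
    by (simp add: sum.cartesian_product)
  finally show ?thesis
    unfolding signed_peak_sum_def by (simp add: sum_insert_max_positions)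
qed

lemma Suc_times_binomial_Suc_int:
  "int (Suc k) * int (m choose Suc k) = (int m - int k) * int (m choose k)"
proof (cases "k \<le> m")
  case True
  have "Suc k * (m choose Suc k) = (m - k) * (m choose k)"
  proof (cases m)
    case (Suc m')
    have "Suc k * (Suc m' choose Suc k) = Suc m' * (m' choose k)"
      by (rule Suc_times_binomial)
    also have "\<dots> = (Suc m' - k) * (Suc m' choose k)"
      using binomial_absorb_comp[of "Suc m'" k] by simp
    finally show ?thesis using Suc by simp
  qed simp
  then show ?thesis
    using True by (metis of_nat_diff of_nat_mult)
qed (simp add: binomial_eq_0)

definition peak_coeff :: "nat \<Rightarrow> nat \<Rightarrow> int" where
  "peak_coeff n k = (-1) ^ (n + k) * int (n div 2 choose k)"

lemma peak_coeff_eq_0: "n < k \<Longrightarrow> peak_coeff n k = 0"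
  by (simp add: peak_coeff_def binomial_eq_0)

lemma peak_coeff_Suc_0: "peak_coeff (Suc n) 0 = - peak_coeff n 0"
  by (simp add: peak_coeff_def)

lemma peak_coeff_Suc_Suc:
  "peak_coeff (Suc n) (Suc k) =
     (2 * int (Suc k) - 1) * peak_coeff n (Suc k) + (int n - 2 * int k) * peak_coeff n k"
proof -
  let ?m = "n div 2"
  have absorb: "int (Suc k) * int (?m choose Suc k) = (int ?m - int k) * int (?m choose k)"
    by (rule Suc_times_binomial_Suc_int)
  have key: "int (Suc n div 2 choose Suc k) =
      - (2 * int k + 1) * int (?m choose Suc k) + (int n - 2 * int k) * int (?m choose k)"
  proof (cases "even n")
    case True
    then have "Suc n div 2 = ?m" "int n = 2 * int ?m" by presburger+
    then show ?thesis using absorb by (simp add: algebra_simps)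
  next
    case False
    then have "Suc n div 2 = Suc ?m" "int n = 2 * int ?m + 1" by presburger+
    then show ?thesis using absorb by (simp add: algebra_simps)
  qed
  let ?e = "(-1::int) ^ (n + k)"
  have "peak_coeff (Suc n) (Suc k) = ?e * int (Suc n div 2 choose Suc k)"
    by (simp add: peak_coeff_def)
  also have "\<dots> = ?e * (- (2 * int k + 1) * int (?m choose Suc k) +
      (int n - 2 * int k) * int (?m choose k))"
    by (simp only: key)
  also have "\<dots> =
      (2 * int (Suc k) - 1) * peak_coeff n (Suc k) + (int n - 2 * int k) * peak_coeff n k"
    by (simp add: peak_coeff_def algebra_simps)
  finally show ?thesis .
qed

lemma signed_peak_sum_0: "signed_peak_sum 0 w = w 0"
proof -
  have "perm_words 0 = {[]}" by (auto simp: perm_words_def)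
  moreover have "rl_minima [] = {}" "peaks [] = {}" by (auto simp: rl_minima_def peaks_def)
  ultimately show ?thesis by (simp add: signed_peak_sum_def)
qed

lemma signed_peak_sum_eq_coeffs:
  "signed_peak_sum n w = (\<Sum>k\<le>n. of_int (peak_coeff n k) * w k)"
proof (induction n arbitrary: w)
  case 0
  show ?case by (simp add: signed_peak_sum_0 peak_coeff_def)
next
  case (Suc n)
  let ?c = "\<lambda>k. of_int (peak_coeff n k)"
  have extend: "(\<Sum>k\<le>n. ?c k * of_int (2 * int k - 1) * w k) =
      (\<Sum>k\<le>Suc n. ?c k * of_int (2 * int k - 1) * w k)"
    by (simp add: peak_coeff_eq_0)
  have "signed_peak_sum (Suc n) w =
      (\<Sum>k\<le>n. ?c k * of_int (2 * int k - 1) * w k) +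
      (\<Sum>k\<le>n. ?c k * of_int (int n - 2 * int k) * w (Suc k))"
    by (simp add: signed_peak_sum_Suc Suc.IH distrib_left sum.distrib mult.assoc)
  also have "\<dots> = - ?c 0 * w 0 + (\<Sum>k\<le>n. ?c (Suc k) * of_int (2 * int (Suc k) - 1) * w (Suc k))
      + (\<Sum>k\<le>n. ?c k * of_int (int n - 2 * int k) * w (Suc k))"
    unfolding extend sum.atMost_Suc_shift by simp
  also have "\<dots> = of_int (peak_coeff (Suc n) 0) * w 0 +
      (\<Sum>k\<le>n. of_int (peak_coeff (Suc n) (Suc k)) * w (Suc k))"
    by (simp add: peak_coeff_Suc_0 peak_coeff_Suc_Suc ring_distribs sum.distrib add.assoc mult_ac)
  finally show ?case by (simp only: sum.atMost_Suc_shift)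
qed

lemma signed_peak_sum_power:
  fixes u :: "'a::comm_ring_1"
  shows "signed_peak_sum n (\<lambda>k. u ^ k) = (-1) ^ n * (1 - u) ^ (n div 2)"
proof -
  have "signed_peak_sum n (\<lambda>k. u ^ k) = (-1) ^ n * (\<Sum>k\<le>n. of_nat (n div 2 choose k) * (- u) ^ k)"
    by (simp add: signed_peak_sum_eq_coeffs peak_coeff_def sum_distrib_left power_add
        power_minus[of u] algebra_simps)
  also have "(\<Sum>k\<le>n. of_nat (n div 2 choose k) * (- u) ^ k) =
      (\<Sum>k\<le>n div 2. of_nat (n div 2 choose k) * (- u) ^ k)"
    by (rule sum.mono_neutral_right) (simp_all add: binomial_eq_0 not_le)
  also have "\<dots> = (1 - u) ^ (n div 2)"
    using binomial_ring[of "- u" 1 "n div 2"] by (simp add: algebra_simps)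
  finally show ?thesis .
qed

lemma word_at_map_upt: "i \<le> n \<Longrightarrow> word_at (map \<sigma> [Suc 0..<Suc n]) i = perm_val \<sigma> i"
  by (auto simp: word_at_def perm_val_def simp del: upt_Suc)

lemma left_peaks_eq_card_peaks: "left_peaks n \<sigma> = card (peaks (map \<sigma> [1..<Suc n]))"
  unfolding left_peaks_def peaks_def
  by (rule arg_cong[where f = card]) (auto simp: word_at_map_upt simp del: upt_Suc)

lemma rl_min_eq_card_rl_minima: "rl_min n \<sigma> = card (rl_minima (map \<sigma> [1..<Suc n]))"
  unfolding rl_min_def rl_minima_def
  by (rule arg_cong[where f = card]) (auto simp: word_at_map_upt simp del: upt_Suc)

lemma permutes_of_perm_word:
  assumes "xs \<in> perm_words n"
  shows "(\<lambda>i. if i \<in> {1..n} then xs ! (i - 1) else i) permutes {1..n}"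
proof (rule bij_imp_permutes)
  have "bij_betw (\<lambda>i. i - 1) {1..n} {..<n}"
    by (rule bij_betw_byWitness[where f' = Suc]) auto
  moreover have "bij_betw ((!) xs) {..<n} {1..n}"
    using assms length_perm_words[OF assms] by (intro bij_betw_nth) (auto simp: perm_words_def)
  ultimately have "bij_betw ((!) xs \<circ> (\<lambda>i. i - 1)) {1..n} {1..n}"
    by (rule bij_betw_trans)
  then show "bij_betw (\<lambda>i. if i \<in> {1..n} then xs ! (i - 1) else i) {1..n} {1..n}"
    by (rule bij_betw_cong[THEN iffD1, rotated]) simp
qed auto

lemma bij_betw_perm_words:
  "bij_betw (\<lambda>\<sigma>. map \<sigma> [1..<Suc n]) {\<sigma>. \<sigma> permutes {1..n}} (perm_words n)"
proof (rule bij_betw_imageI)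
  show "inj_on (\<lambda>\<sigma>. map \<sigma> [1..<Suc n]) {\<sigma>. \<sigma> permutes {1..n}}"
  proof (rule inj_onI, rule ext)
    fix \<sigma> \<tau> x
    assume "\<sigma> \<in> {\<sigma>. \<sigma> permutes {1..n}}" "\<tau> \<in> {\<sigma>. \<sigma> permutes {1..n}}"
      and "map \<sigma> [1..<Suc n] = map \<tau> [1..<Suc n]"
    then show "\<sigma> x = \<tau> x"
      by (cases "x \<in> {1..n}") (auto simp: permutes_not_in simp del: upt_Suc)
  qed
next
  show "(\<lambda>\<sigma>. map \<sigma> [1..<Suc n]) ` {\<sigma>. \<sigma> permutes {1..n}} = perm_words n"
  proof (rule set_eqI, rule iffI)
    fix xs assume "xs \<in> (\<lambda>\<sigma>. map \<sigma> [1..<Suc n]) ` {\<sigma>. \<sigma> permutes {1..n}}"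
    then obtain \<sigma> where "\<sigma> permutes {1..n}" and xs: "xs = map \<sigma> [1..<Suc n]" by auto
    then show "xs \<in> perm_words n"
      using permutes_inj_on[of \<sigma> "{1..n}"] permutes_image[of \<sigma> "{1..n}"]
      by (auto simp: perm_words_def distinct_map atLeastLessThanSuc_atLeastAtMost
          simp del: upt_Suc)
  next
    fix xs assume xs: "xs \<in> perm_words n"
    let ?\<sigma> = "\<lambda>i. if i \<in> {1..n} then xs ! (i - 1) else i"
    have "map ?\<sigma> [1..<Suc n] = xs"
      by (rule nth_equalityI) (auto simp: length_perm_words[OF xs] simp del: upt_Suc)
    with permutes_of_perm_word[OF xs]
    show "xs \<in> (\<lambda>\<sigma>. map \<sigma> [1..<Suc n]) ` {\<sigma>. \<sigma> permutes {1..n}}" by force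
  qed
qed

theorem theorem1p7:
  fixes n :: nat and u :: "'a :: comm_ring_1"
  assumes "n \<ge> 1"
  shows "(\<Sum>\<sigma> \<in> {\<sigma>. \<sigma> permutes {1..n}}. u ^ left_peaks n \<sigma> * (-1) ^ rl_min n \<sigma>)
         = (if even n then (1 - u) ^ (n div 2) else - ((1 - u) ^ (n div 2)))"
proof -
  have "(\<Sum>\<sigma> \<in> {\<sigma>. \<sigma> permutes {1..n}}. u ^ left_peaks n \<sigma> * (-1) ^ rl_min n \<sigma>)
      = (\<Sum>\<sigma> \<in> {\<sigma>. \<sigma> permutes {1..n}}. (\<lambda>xs. (-1) ^ card (rl_minima xs) * u ^ card (peaks xs))
          (map \<sigma> [1..<Suc n]))"
    by (simp add: left_peaks_eq_card_peaks rl_min_eq_card_rl_minima mult.commute del: upt_Suc)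
  also have "\<dots> = signed_peak_sum n (\<lambda>k. u ^ k)"
    unfolding signed_peak_sum_def by (rule sum.reindex_bij_betw[OF bij_betw_perm_words])
  also have "\<dots> = (-1) ^ n * (1 - u) ^ (n div 2)"
    by (rule signed_peak_sum_power)
  finally show ?thesis by simp
qed

end
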